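(* Let Assumption (W) hold and assume additionally that $W$ does not depend on $x_3$ (so $Q$, $Q_2$ do not either). Then for all $A,U\in\mathbb R^{2\times2}_{sym}$: $Q_{el}(A)=\frac1{12}\min_{d\in\mathbb R^3}Q\big(\iota(A)+\mathrm{sym}(d\otimes e_3)\big)$, $E_{res}(U)=\frac3{16}Q_{el}(U)$, and $\mathbb B(U)=\frac34U$. If moreover $Q(A)=\frac\lambda2(\mathrm{tr}A)^2+\mu|\mathrm{sym}A|^2$ for all $A\in\mathbb R^{3\times3}$ (with constants $\lambda,\mu$ for which this $Q$ is compatible with Assumption (W)), then $Q_{el}(A)=\frac1{12}\Big(\frac{\mu\lambda}{\lambda+2\mu}(\mathrm{tr}A)^2+\mu|A|^2\Big)$ and $E_{res}(U)=\frac1{64}\Big(\frac{\mu\lambda}{\lambda+2\mu}(\mathrm{tr}U)^2+\mu|U|^2\Big)$.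
   Context: Assumption (W): there are $C_W>0$, $q_W>4$ and a monotone $r_W:[0,\infty)\to[0,\infty]$ with $r_W(\delta)\to0$ as $\delta\to0$, and $W:(-\frac12,\frac12)\times\mathbb R^{3\times3}\to[0,\infty]$ is Borel with, for all $x_3$: (W1) $W(x_3,RF)=W(x_3,F)$ for all $R\in SO(3)$; (W2) $W(x_3,F)\ge C_W^{-1}\mathrm{dist}^2(F,SO(3))$ for all $F$, and $W(x_3,F)\le C_W\mathrm{dist}^2(F,SO(3))$ whenever $\mathrm{dist}^2(F,SO(3))\le1/C_W$; (W3) there is a quadratic form $Q(x_3,\cdot)$ on $\mathbb R^{3\times3}$ with $|W(x_3,I+G)-Q(x_3,G)|\le|G|^2r_W(|G|)$; (W4) $W(x_3,F)\ge C_W^{-1}\max\{|F|^{q_W},(\det F)^{-q_W/2}\}-C_W$ if $\det F>0$, $W(x_3,F)=+\infty$ if $\det F\le0$. Notation: for $A\in\mathbb R^{2\times2}$, $\iota(A)\in\mathbb R^{3\times3}$ has upper-left block $A$ and zeros elsewhere; $\mathrm{sym}G=\frac12(G+G^\top)$; $A\cdot B=\mathrm{tr}(A^\top B)$. For $A,U\in\mathbb R^{2\times2}_{sym}$: $Q_2(x_3,A):=\min_{d\in\mathbb R^3}Q(x_3,\iota(A)+\mathrm{sym}(d\otimes e_3))$; $Q_{el}(A):=\min_{M\in\mathbb R^{2\times2}_{sym}}\int_{-1/2}^{1/2}Q_2(x_3,x_3A+M)\,dx_3$; $E_{res}(U):=\min_{A,M\in\mathbb R^{2\times2}_{sym}}\int_{-1/2}^{1/2}Q_2(x_3,x_3A+M+\mathbf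 1(x_3>0)\tfrac12U)\,dx_3$. With $G_1=e_1\otimes e_1$, $G_2=e_2\otimes e_2$, $G_3=\frac1{\sqrt2}(e_1\otimes e_2+e_2\otimes e_1)$, let $(A_i,M_i)$ be the unique minimizer over $(\mathbb R^{2\times2}_{sym})^2$ of $(A,M)\mapsto\int_{-1/2}^{1/2}Q_2(x_3,\mathbf 1(x_3>0)\tfrac12G_i-(x_3A+M))dx_3$, and $\mathbb B(U):=\sum_{i=1}^3(U\cdot G_i)A_i$. *)

theory Defs
  imports "HOL-Analysis.Analysis"
begin

type_synonym mat3 = "real^3^3"
type_synonym mat2 = "real^2^2"

definition Sym2 :: "mat2 set" where
  "Sym2 = {A. transpose A = A}"

definition SO3 :: "mat3 set" where
  "SO3 = {R. orthogonal_matrix R \<and> det R = 1}"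

text \<open>Symmetric part, outer product, third basis vector, embedding iota.
  Indices of type 3 are 1,2,3 (3 = 0 in the numeral type); of type 2 are 1,2.\<close>
definition symm :: "'a::field^'n^'n \<Rightarrow> 'a^'n^'n" where
  "symm G = (\<chi> i j. (G $ i $ j + G $ j $ i) / 2)"

definition outer :: "real^3 \<Rightarrow> real^3 \<Rightarrow> mat3" where
  "outer a b = (\<chi> i j. a $ i * b $ j)"

definition e3 :: "real^3" where
  "e3 = axis (3::3) 1"

definition iota :: "mat2 \<Rightarrow> mat3" where
  "iota A = (\<chi> i j.
     if i = 1 \<and> j = 1 then A $ 1 $ 1
     else if i = 1 \<and> j = 2 then A $ 1 $ 2
     else if i = 2 \<and> j = 1 then A $ 2 $ 1
     else if i = 2 \<and> j = 2 then A $ 2 $ 2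
     else 0)"

definition quadratic_form :: "(mat3 \<Rightarrow> real) \<Rightarrow> bool" where
  "quadratic_form Q \<longleftrightarrow> (\<exists>B. bilinear B \<and> (\<forall>G. Q G = B G G))"

definition assumption_W :: "real \<Rightarrow> real \<Rightarrow> (real \<Rightarrow> ereal) \<Rightarrow> (mat3 \<Rightarrow> ereal) \<Rightarrow> (mat3 \<Rightarrow> real) \<Rightarrow> bool" where
  "assumption_W CW qW rW W Q \<longleftrightarrow>
     CW > 0 \<and> qW > 4 \<and>
     (\<forall>d. 0 \<le> d \<longrightarrow> 0 \<le> rW d) \<and> mono_on {0..} rW \<and> (rW \<longlongrightarrow> 0) (at 0 within {0..}) \<and>
     W \<in> borel_measurable borel \<and> (\<forall>F. 0 \<le> W F) \<and>
     (\<forall>R\<in>SO3. \<forall>F. W (R ** F) = W F) \<and>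
     (\<forall>F. W F \<ge> ereal ((infdist F SO3)\<^sup>2 / CW)) \<and>
     (\<forall>F. (infdist F SO3)\<^sup>2 \<le> 1 / CW \<longrightarrow> W F \<le> ereal (CW * (infdist F SO3)\<^sup>2)) \<and>
     quadratic_form Q \<and>
     (\<forall>G. \<bar>W (mat 1 + G) - ereal (Q G)\<bar> \<le> ereal ((norm G)\<^sup>2) * rW (norm G)) \<and>
     (\<forall>F. det F > 0 \<longrightarrow>
         W F \<ge> ereal (max (norm F powr qW) (det F powr (- qW / 2)) / CW - CW)) \<and>
     (\<forall>F. det F \<le> 0 \<longrightarrow> W F = \<infinity>)"

definition Q2 :: "(real \<Rightarrow> mat3 \<Rightarrow> real) \<Rightarrow> real \<Rightarrow> mat2 \<Rightarrow> real" where
  "Q2 Qx x3 A = (INF d. Qx x3 (iota A + symm (outer d e3)))"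

definition Qel :: "(real \<Rightarrow> mat3 \<Rightarrow> real) \<Rightarrow> mat2 \<Rightarrow> real" where
  "Qel Qx A = (INF M\<in>Sym2. integral {-(1/2)..1/2} (\<lambda>x3. Q2 Qx x3 (x3 *\<^sub>R A + M)))"

definition Eres :: "(real \<Rightarrow> mat3 \<Rightarrow> real) \<Rightarrow> mat2 \<Rightarrow> real" where
  "Eres Qx U = (INF AM\<in>Sym2 \<times> Sym2. integral {-(1/2)..1/2}
      (\<lambda>x3. Q2 Qx x3 (x3 *\<^sub>R fst AM + snd AM + (if x3 > 0 then (1/2) *\<^sub>R U else 0))))"

definition Gb :: "nat \<Rightarrow> mat2" where
  "Gb i = (if i = 1 then (\<chi> a b. if a = 1 \<and> b = 1 then 1 else 0)
           else if i = 2 then (\<chi> a b. if a = 2 \<and> b = 2 then 1 else 0)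
           else (\<chi> a b. if a \<noteq> b then 1 / sqrt 2 else 0))"

definition Jfun :: "(real \<Rightarrow> mat3 \<Rightarrow> real) \<Rightarrow> nat \<Rightarrow> mat2 \<times> mat2 \<Rightarrow> real" where
  "Jfun Qx i AM = integral {-(1/2)..1/2}
      (\<lambda>x3. Q2 Qx x3 ((if x3 > 0 then (1/2) *\<^sub>R Gb i else 0) - (x3 *\<^sub>R fst AM + snd AM)))"

definition minimizer :: "(real \<Rightarrow> mat3 \<Rightarrow> real) \<Rightarrow> nat \<Rightarrow> mat2 \<times> mat2" where
  "minimizer Qx i = (THE AM. AM \<in> Sym2 \<times> Sym2 \<and> (\<forall>AM'\<in>Sym2 \<times> Sym2. Jfun Qx i AM \<le> Jfun Qx i AM'))"

definition BB :: "(real \<Rightarrow> mat3 \<Rightarrow> real) \<Rightarrow> mat2 \<Rightarrow> mat2" where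
  "BB Qx U = (\<Sum>i\<in>{1,2,3::nat}. (U \<bullet> Gb i) *\<^sub>R fst (minimizer Qx i))"

end

theory Submission
  imports Defs
begin

text \<open>
  For an \<open>x\<^sub>3\<close>-independent \<open>Q\<close> the relaxed form
  \<open>Q\<^sub>2(A) = min\<^sub>d Q(\<iota>(A) + sym(d \<otimes> e\<^sub>3))\<close> is itself a quadratic form. Indeed \<open>Q\<close> is
  coercive on symmetric matrices (compare \<open>W(I + tG)\<close> with \<open>Q(tG) = t\<^sup>2 Q(G)\<close> via (W2), (W3)
  and let \<open>t \<rightarrow> 0\<close>), so an optimal shear \<open>d\<close> exists; it is characterised by orthogonality
  to all shears in the bilinear form of \<open>Q\<close> and therefore depends linearly on \<open>A\<close>.

  Every integrand in \<open>Q\<^sub>e\<^sub>l\<close>, \<open>E\<^sub>r\<^sub>e\<^sub>s\<close> and in the problem defining \<open>(A\<^sub>i, M\<^sub>i)\<close> is then \<open>Q\<^sub>2\<close>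
  applied to \<open>x\<^sub>3 R + S + 1(x\<^sub>3 > 0) P\<close>, whose integral over \<open>(-1/2, 1/2)\<close> is, after
  completing the square, \<open>Q\<^sub>2(R + 3/2 P)/12 + Q\<^sub>2(S + P/2) + Q\<^sub>2(P)/16\<close>. Minimising over
  \<open>R, S\<close> (uniquely, by positivity of \<open>Q\<^sub>2\<close>) gives \<open>Q\<^sub>e\<^sub>l = Q\<^sub>2/12\<close>, \<open>E\<^sub>r\<^sub>e\<^sub>s(U) = Q\<^sub>2(U)/64\<close>
  and \<open>A\<^sub>i = 3/4 G\<^sub>i\<close>. For the isotropic \<open>Q\<close> the minimisation over \<open>d\<close> is explicit.
\<close>

section \<open>Matrix algebra and the Frobenius norm\<close>

lemma transpose_add: "transpose (A + B) = transpose A + transpose (B::'a::semiring_1^'n^'m)"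
  by (simp add: transpose_def vec_eq_iff)

lemma transpose_diff: "transpose (A - B) = transpose A - transpose (B::'a::ab_group_add^'n^'m)"
  by (simp add: transpose_def vec_eq_iff)

lemma matrix_add_rdistrib: "((A::'a::semiring_1^'n^'m) + B) ** C = A ** C + B ** C"
  by (simp add: matrix_matrix_mult_def vec_eq_iff sum.distrib distrib_right)

lemma matrix_diff_ldistrib: "(A::'a::ring_1^'n^'m) ** (B - C) = A ** B - A ** C"
  by (simp add: matrix_matrix_mult_def vec_eq_iff sum_subtractf right_diff_distrib)

lemma matrix_diff_rdistrib: "((A::'a::ring_1^'n^'m) - B) ** C = A ** C - B ** C"
  by (simp add: matrix_matrix_mult_def vec_eq_iff sum_subtractf left_diff_distrib)

lemma symm_add: "symm (G + H) = symm G + symm (H::'a::field^'n^'n)"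
  by (simp add: vec_eq_iff symm_def add_divide_distrib)

lemma symm_eq_half_add_transpose: "symm G = (1/2) *\<^sub>R (G + transpose (G::real^'n^'n))"
  by (simp add: vec_eq_iff symm_def transpose_def)

lemma gram_minus_id_eq:
  assumes "transpose R ** R = (mat 1 :: 'a::comm_ring_1^'n^'n)"
  shows "transpose F ** F - mat 1
    = transpose (F - R) ** (F - R) + transpose (F - R) ** R + transpose R ** (F - R)"
  by (simp add: transpose_diff matrix_diff_ldistrib matrix_diff_rdistrib assms)

lemma norm_vec_power2: "(norm (x::'a::real_inner^'n))\<^sup>2 = (\<Sum>i\<in>UNIV. (norm (x$i))\<^sup>2)"
  by (simp add: power2_norm_eq_inner inner_vec_def)

lemma norm_matrix_power2: "(norm (X::real^'n^'m))\<^sup>2 = (\<Sum>i\<in>UNIV. \<Sum>j\<in>UNIV. (X$i$j)\<^sup>2)"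
  by (simp add: norm_vec_power2)

lemma norm_transpose: "norm (transpose (X::real^'n^'m)) = norm X"
proof -
  have "(norm (transpose X))\<^sup>2 = (\<Sum>i\<in>UNIV. \<Sum>j\<in>UNIV. (X$j$i)\<^sup>2)"
    by (simp add: norm_matrix_power2 transpose_def)
  also have "\<dots> = (norm X)\<^sup>2"
    unfolding norm_matrix_power2 by (rule sum.swap)
  finally show ?thesis
    by (simp add: power2_eq_iff_nonneg)
qed

lemma norm_matrix_mult_le: "norm ((X::real^'n^'m) ** (Y::real^'p^'n)) \<le> norm X * norm Y"
proof -
  have entry: "((X ** Y)$i$j)\<^sup>2 \<le> (norm (X$i))\<^sup>2 * (norm (column j Y))\<^sup>2" for i j
  proof -
    have "(X ** Y)$i$j = X$i \<bullet> column j Y"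
      by (simp add: matrix_matrix_mult_def inner_vec_def column_def mult.commute)
    then show ?thesis
      using Cauchy_Schwarz_ineq[of "X$i" "column j Y"] by (simp add: power2_norm_eq_inner)
  qed
  have "(norm (X ** Y))\<^sup>2 \<le> (\<Sum>i\<in>UNIV. \<Sum>j\<in>UNIV. (norm (X$i))\<^sup>2 * (norm (column j Y))\<^sup>2)"
    unfolding norm_matrix_power2 by (intro sum_mono entry)
  also have "\<dots> = (norm X)\<^sup>2 * (norm (transpose Y))\<^sup>2"
  proof -
    have "transpose Y $ j = column j Y" for j
      by (simp add: vec_eq_iff transpose_def column_def)
    then show ?thesis
      by (simp add: norm_vec_power2[of X] norm_vec_power2[of "transpose Y"] sum_product)
  qed
  finally have "(norm (X ** Y))\<^sup>2 \<le> (norm X * norm Y)\<^sup>2"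
    by (simp add: norm_transpose power_mult_distrib)
  then show ?thesis
    by (rule power2_le_imp_le) simp
qed

lemma norm_orthogonal_matrix:
  assumes "transpose R ** R = (mat 1 :: real^'n^'n)"
  shows "norm R = sqrt CARD('n)"
proof -
  have diag: "(\<Sum>k\<in>UNIV. (R$k$j)\<^sup>2) = 1" for j
  proof -
    have "(\<Sum>k\<in>UNIV. (R$k$j)\<^sup>2) = (transpose R ** R)$j$j"
      by (simp add: matrix_matrix_mult_def transpose_def power2_eq_square)
    then show ?thesis
      using assms by (simp add: mat_def)
  qed
  have "(norm R)\<^sup>2 = (\<Sum>j\<in>UNIV. \<Sum>k\<in>UNIV. (R$k$j)\<^sup>2)"
    unfolding norm_matrix_power2 by (rule sum.swap)
  also have "\<dots> = CARD('n)"
    by (simp add: diag)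
  finally show ?thesis
    by (simp add: real_sqrt_unique)
qed

section \<open>Quadratic forms\<close>

lemma quadratic_form_scale: "quadratic_form Q \<Longrightarrow> Q (t *\<^sub>R G) = t\<^sup>2 * Q G"
  unfolding quadratic_form_def by (auto simp: bilinear_lmul bilinear_rmul power2_eq_square)

lemma quadratic_form_symmetric:
  assumes "quadratic_form Q"
  obtains B where "bilinear B" "\<And>X Y. B X Y = B Y X" "\<And>G. Q G = B G G"
proof -
  from assms obtain B where B: "bilinear B" "\<And>G. Q G = B G G"
    unfolding quadratic_form_def by auto
  define B' where "B' X Y = (B X Y + B Y X) / 2" for X Y
  have "bilinear B'"
    unfolding bilinear_def B'_def
    by (auto intro!: linearI simp: bilinear_ladd[OF B(1)] bilinear_radd[OF B(1)]
        bilinear_lmul[OF B(1)] bilinear_rmul[OF B(1)] add_divide_distrib algebra_simps)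
  moreover have "B' X Y = B' Y X" for X Y
    by (simp add: B'_def)
  moreover have "Q G = B' G G" for G
    by (simp add: B'_def B(2))
  ultimately show ?thesis
    using that by blast
qed

lemma nonneg_quadratic_imp_linear_coeff_0:
  fixes a q :: real
  assumes "\<And>s. 0 \<le> 2 * s * a + s\<^sup>2 * q"
  shows "a = 0"
proof -
  define k where "k = \<bar>q\<bar> + 1"
  have k: "0 < k" "q \<le> k"
    by (simp_all add: k_def)
  have "0 \<le> 2 * (- a / k) * a + (- a / k)\<^sup>2 * q"
    by (rule assms)
  also have "\<dots> \<le> 2 * (- a / k) * a + (- a / k)\<^sup>2 * k"
    using k by (intro add_left_mono mult_left_mono) auto
  also have "\<dots> = - a\<^sup>2 / k"
    using k by (simp add: power2_eq_square field_simps)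
  finally have "a\<^sup>2 \<le> 0"
    using k by (simp add: divide_le_0_iff)
  then show ?thesis
    by simp
qed

lemma complete_square_isotropic:
  fixes lam mu t x :: real
  assumes "0 < lam + 2 * mu"
  shows "lam / 2 * (t + x)\<^sup>2 + mu * x\<^sup>2
    = mu * lam / (lam + 2 * mu) * t\<^sup>2 + (lam + 2 * mu) / 2 * (x + lam * t / (lam + 2 * mu))\<^sup>2"
proof -
  define y where "y = lam * t / (lam + 2 * mu)"
  have y: "(lam + 2 * mu) * y = lam * t"
    using assms by (simp add: y_def)
  have "mu * t * y + (lam + 2 * mu) / 2 * (x + y)\<^sup>2 - (lam / 2 * (t + x)\<^sup>2 + mu * x\<^sup>2)
      = (x + y / 2 + t / 2) * ((lam + 2 * mu) * y - lam * t)"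
    by (simp add: power2_eq_square field_simps)
  then have "lam / 2 * (t + x)\<^sup>2 + mu * x\<^sup>2 = mu * t * y + (lam + 2 * mu) / 2 * (x + y)\<^sup>2"
    by (simp add: y)
  moreover have "mu * t * y = mu * lam / (lam + 2 * mu) * t\<^sup>2"
    by (simp add: y_def power2_eq_square)
  ultimately show ?thesis
    by (simp add: y_def)
qed

section \<open>Coercivity of \<open>Q\<close> from Assumption (W)\<close>

lemma norm_gram_minus_id_le:
  assumes R: "transpose R ** R = (mat 1 :: real^3^3)"
  shows "norm (transpose F ** F - mat 1) \<le> (dist F R)\<^sup>2 + 4 * dist F R"
proof -
  define e where "e = dist F R"
  have e: "norm (F - R) = e" "0 \<le> e"
    by (simp_all add: e_def dist_norm)
  have "norm R \<le> 2"
    using norm_orthogonal_matrix[OF R] real_sqrt_le_mono[of 3 4] by simp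
  then have "e * norm R \<le> 2 * e"
    using e by (simp add: mult_left_mono mult.commute)
  then have "norm (transpose (F - R) ** R) \<le> 2 * e" "norm (transpose R ** (F - R)) \<le> 2 * e"
    using norm_matrix_mult_le[of "transpose (F - R)" R] norm_matrix_mult_le[of "transpose R" "F - R"] e
    by (simp_all add: norm_transpose mult.commute)
  moreover have "norm (transpose (F - R) ** (F - R)) \<le> e\<^sup>2"
    using norm_matrix_mult_le[of "transpose (F - R)" "F - R"] by (simp add: norm_transpose e power2_eq_square)
  ultimately show ?thesis
    unfolding gram_minus_id_eq[OF R] e_def[symmetric]
    by (smt (verit) norm_triangle_ineq)
qed

lemma infdist_SO3_ge: "min 1 (norm (transpose F ** F - mat 1) / 5) \<le> infdist F SO3"
proof -
  have "min 1 (norm (transpose F ** F - mat 1) / 5) \<le> dist F R" if "R \<in> SO3" for R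
  proof -
    have "transpose R ** R = mat 1"
      using that by (simp add: SO3_def orthogonal_matrix)
    then have "norm (transpose F ** F - mat 1) \<le> (dist F R)\<^sup>2 + 4 * dist F R"
      by (rule norm_gram_minus_id_le)
    moreover have "(dist F R)\<^sup>2 \<le> dist F R" if "dist F R \<le> 1"
      using that by (simp add: power2_eq_square mult_left_le_one_le)
    ultimately show ?thesis
      by linarith
  qed
  moreover have "SO3 \<noteq> {}"
    using orthogonal_matrix_id by (auto simp: SO3_def)
  ultimately show ?thesis
    by (simp add: infdist_notempty cINF_greatest)
qed

lemma norm_gram_minus_id_near_id:
  fixes G :: "real^'n^'n"
  assumes "0 \<le> t"
  shows "2 * t * norm (symm G) - t\<^sup>2 * (norm G)\<^sup>2
    \<le> norm (transpose (mat 1 + t *\<^sub>R G) ** (mat 1 + t *\<^sub>R G) - mat 1)"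
proof -
  have "transpose (mat 1 + t *\<^sub>R G) ** (mat 1 + t *\<^sub>R G) - mat 1
      = (2 * t) *\<^sub>R symm G + t\<^sup>2 *\<^sub>R (transpose G ** G)"
    by (simp add: transpose_add transpose_scalar matrix_add_ldistrib matrix_add_rdistrib
        matrix_scalar_ac scalar_matrix_assoc[symmetric] symm_eq_half_add_transpose power2_eq_square
        algebra_simps)
  moreover have "norm (t\<^sup>2 *\<^sub>R (transpose G ** G)) \<le> t\<^sup>2 * (norm G)\<^sup>2"
    using norm_matrix_mult_le[of "transpose G" G]
    by (simp add: norm_transpose power2_eq_square mult_left_mono)
  ultimately show ?thesis
    using norm_diff_ineq[of "(2 * t) *\<^sub>R symm G" "t\<^sup>2 *\<^sub>R (transpose G ** G)"] assms by simp
qed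

lemma infdist_SO3_near_id_ge:
  fixes G :: mat3
  assumes "0 < t" and "t * (2 * norm (symm G)) \<le> 5"
  shows "t * max 0 ((2 * norm (symm G) - t * (norm G)\<^sup>2) / 5) \<le> infdist (mat 1 + t *\<^sub>R G) SO3"
proof -
  have "t * (2 * norm (symm G) - t * (norm G)\<^sup>2)
      \<le> norm (transpose (mat 1 + t *\<^sub>R G) ** (mat 1 + t *\<^sub>R G) - mat 1)"
    using norm_gram_minus_id_near_id[of t G] assms by (simp add: power2_eq_square algebra_simps)
  moreover have "0 \<le> t * (t * (norm G)\<^sup>2)"
    using assms(1) by simp
  then have "t * (2 * norm (symm G) - t * (norm G)\<^sup>2) \<le> 5"
    using assms(2) by (simp add: right_diff_distrib)
  ultimately have "t * (2 * norm (symm G) - t * (norm G)\<^sup>2) / 5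
      \<le> min 1 (norm (transpose (mat 1 + t *\<^sub>R G) ** (mat 1 + t *\<^sub>R G) - mat 1) / 5)"
    by simp
  then show ?thesis
    using infdist_SO3_ge[of "mat 1 + t *\<^sub>R G"] infdist_nonneg assms(1)
    by (auto simp: max_mult_distrib_left)
qed

lemma le_of_tendsto_ereal_error:
  fixes r :: "'a \<Rightarrow> ereal" and a :: "'a \<Rightarrow> real"
  assumes "F \<noteq> bot" and r: "(r \<longlongrightarrow> 0) F" and a: "(a \<longlongrightarrow> a0) F"
    and bound: "eventually (\<lambda>u. \<forall>x. r u = ereal x \<longrightarrow> a u - c * x \<le> q) F"
  shows "a0 \<le> q"
proof -
  have "eventually (\<lambda>u. r u < 1) F" "eventually (\<lambda>u. -1 < r u) F"
    using r by (auto intro: order_tendstoD)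
  with bound have "eventually (\<lambda>u. a u - c * real_of_ereal (r u) \<le> q) F"
  proof eventually_elim
    case (elim u)
    then show ?case
      by (cases "r u") auto
  qed
  moreover have "((\<lambda>u. a u - c * real_of_ereal (r u)) \<longlongrightarrow> a0 - c * 0) F"
    using r by (intro tendsto_intros a) (use lim_real_of_ereal[of r 0] in \<open>simp add: zero_ereal_def\<close>)
  ultimately show ?thesis
    using tendsto_upperbound[OF _ _ \<open>F \<noteq> bot\<close>] by fastforce
qed

lemma assumption_W_Q_lower:
  assumes AW: "assumption_W CW qW rW W Q" and rx: "rW (norm H) = ereal x"
  shows "(infdist (mat 1 + H) SO3)\<^sup>2 / CW - (norm H)\<^sup>2 * x \<le> Q H"
proof -
  from AW have "ereal ((infdist (mat 1 + H) SO3)\<^sup>2 / CW) \<le> W (mat 1 + H)"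
    and "\<bar>W (mat 1 + H) - ereal (Q H)\<bar> \<le> ereal ((norm H)\<^sup>2) * rW (norm H)"
    and "0 \<le> W (mat 1 + H)"
    unfolding assumption_W_def by blast+
  then show ?thesis
    using rx by (cases "W (mat 1 + H)") auto
qed

lemma assumption_W_Q_lower_near_id:
  assumes AW: "assumption_W CW qW rW W Q"
    and t: "0 < t" "t * (2 * norm (symm G)) \<le> 5" and rx: "rW (t * norm G) = ereal x"
  shows "(max 0 ((2 * norm (symm G) - t * (norm G)\<^sup>2) / 5))\<^sup>2 / CW - (norm G)\<^sup>2 * x \<le> Q G"
proof -
  define m where "m = max 0 ((2 * norm (symm G) - t * (norm G)\<^sup>2) / 5)"
  have "0 < CW" "quadratic_form Q"
    using AW by (simp_all add: assumption_W_def)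
  have "(t * m)\<^sup>2 / CW \<le> (infdist (mat 1 + t *\<^sub>R G) SO3)\<^sup>2 / CW"
    using infdist_SO3_near_id_ge[OF t(1,2)] t(1) \<open>0 < CW\<close>
    by (intro divide_right_mono power_mono) (auto simp: m_def)
  moreover have "(infdist (mat 1 + t *\<^sub>R G) SO3)\<^sup>2 / CW - (t * norm G)\<^sup>2 * x \<le> t\<^sup>2 * Q G"
    using assumption_W_Q_lower[OF AW, of "t *\<^sub>R G" x] t(1) rx
    by (simp add: quadratic_form_scale[OF \<open>quadratic_form Q\<close>])
  ultimately have "t\<^sup>2 * (m\<^sup>2 / CW - (norm G)\<^sup>2 * x) \<le> t\<^sup>2 * Q G"
    by (simp add: algebra_simps)
  then show ?thesis
    using t(1) by (simp add: m_def)
qed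

lemma assumption_W_coercive:
  assumes AW: "assumption_W CW qW rW W Q"
  shows "4 / (25 * CW) * (norm (symm G))\<^sup>2 \<le> Q G"
proof (cases "G = 0")
  case True
  have "quadratic_form Q"
    using AW by (simp add: assumption_W_def)
  then have "Q G = 0"
    using True quadratic_form_scale[of Q 0 0] by simp
  moreover have "symm G = 0"
    using True by (simp add: symm_def vec_eq_iff)
  ultimately show ?thesis
    by simp
next
  case False
  define s where "s = norm (symm G)"
  define g where "g = norm G"
  have g: "0 < g"
    using False by (simp add: g_def)
  have CW: "0 < CW" and rW: "(rW \<longlongrightarrow> 0) (at_right 0)"
    using AW unfolding assumption_W_def by (auto elim: tendsto_within_subset)
  \<comment> \<open>Parametrise by \<open>u = t * g\<close>, the size of the perturbation \<open>t G\<close>, where \<open>rW\<close> is evaluated.\<close>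
  have "(max 0 ((2 * s - 0 * g) / 5))\<^sup>2 / CW \<le> Q G"
  proof (rule le_of_tendsto_ereal_error[OF _ rW, where c = "g\<^sup>2"])
    show "((\<lambda>u. (max 0 ((2 * s - u * g) / 5))\<^sup>2 / CW) \<longlongrightarrow> (max 0 ((2 * s - 0 * g) / 5))\<^sup>2 / CW)
        (at_right 0)"
      by (intro tendsto_intros) (use CW in auto)
    have "eventually (\<lambda>u. 2 * s * u < 5 * g) (at_right 0)"
      using g by (intro order_tendstoD(2)[of "\<lambda>u. 2 * s * u" 0]) (auto intro!: tendsto_eq_intros)
    then show "eventually (\<lambda>u. \<forall>x. rW u = ereal x \<longrightarrow>
        (max 0 ((2 * s - u * g) / 5))\<^sup>2 / CW - g\<^sup>2 * x \<le> Q G) (at_right 0)"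
      using eventually_at_right_less[of "0::real"]
    proof eventually_elim
      case (elim u)
      then have "0 < u / g" "u / g * (2 * s) \<le> 5"
        using g by (simp_all add: field_simps)
      then show ?case
        using assumption_W_Q_lower_near_id[OF AW, of "u / g" G] g
        by (simp add: s_def g_def power2_eq_square)
    qed
  qed simp
  then show ?thesis
    by (simp add: s_def power2_eq_square)
qed

section \<open>Transverse shears and symmetric \<open>2\<times>2\<close> matrices\<close>

lemma e3_entry: "e3 $ 1 = 0" "e3 $ 2 = 0" "e3 $ 3 = 1"
  by (simp_all add: e3_def axis_def)

definition sym_e3 :: "real^3 \<Rightarrow> mat3" where
  "sym_e3 d = symm (outer d e3)"

lemma sym_e3_entry: "sym_e3 d $ i $ j = (d$i * e3$j + d$j * e3$i) / 2"
  by (simp add: sym_e3_def symm_def outer_def)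

lemma linear_sym_e3: "linear sym_e3"
  by (rule linearI) (simp_all add: vec_eq_iff sym_e3_entry algebra_simps add_divide_distrib)

lemma symm_sym_e3: "symm (sym_e3 d) = sym_e3 d"
  by (simp add: vec_eq_iff symm_def sym_e3_entry algebra_simps)

lemma norm_le_norm_sym_e3: "norm d \<le> 2 * norm (sym_e3 d)"
proof (rule power2_le_imp_le)
  have "(norm (sym_e3 d))\<^sup>2 = (d$1)\<^sup>2 / 2 + (d$2)\<^sup>2 / 2 + (d$3)\<^sup>2"
    unfolding norm_matrix_power2 by (simp add: sum_3 sym_e3_entry e3_entry power2_eq_square field_simps)
  moreover have "(norm d)\<^sup>2 = (d$1)\<^sup>2 + (d$2)\<^sup>2 + (d$3)\<^sup>2"
    by (simp add: norm_vec_power2 sum_3)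
  ultimately show "(norm d)\<^sup>2 \<le> (2 * norm (sym_e3 d))\<^sup>2"
    by (simp add: power_mult_distrib)
qed simp

lemma linear_iota: "linear iota"
  by (rule linearI) (auto simp: vec_eq_iff iota_def)

lemma trace_iota_sym_e3: "trace (iota A + sym_e3 d) = trace A + d$3"
  by (simp add: trace_def sum_3 sum_2 iota_def sym_e3_entry e3_entry)

lemma subspace_Sym2: "subspace Sym2"
  by (auto simp: subspace_def Sym2_def transpose_add transpose_scalar transpose_def vec_eq_iff)

lemma Sym2_entry: "A \<in> Sym2 \<Longrightarrow> A$2$1 = A$1$2"
  unfolding Sym2_def by (metis (mono_tags) mem_Collect_eq transpose_def vec_lambda_beta)

lemma norm_symm_iota_sym_e3:
  assumes "A \<in> Sym2"
  shows "(norm (symm (iota A + sym_e3 d)))\<^sup>2 = (norm A)\<^sup>2 + (d$1)\<^sup>2 / 2 + (d$2)\<^sup>2 / 2 + (d$3)\<^sup>2"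
proof -
  have "symm (iota A + sym_e3 d) = iota A + sym_e3 d"
    using Sym2_entry[OF assms]
    by (simp add: vec_eq_iff forall_3 symm_def iota_def sym_e3_entry algebra_simps)
  then show ?thesis
    using Sym2_entry[OF assms] unfolding norm_matrix_power2
    by (simp add: sum_3 sum_2 iota_def sym_e3_entry e3_entry power2_eq_square field_simps)
qed

lemma isotropic_Q_iota_sym_e3:
  assumes "\<forall>G. Q G = lam / 2 * (trace G)\<^sup>2 + mu * (norm (symm G))\<^sup>2" and "A \<in> Sym2"
  shows "Q (iota A + sym_e3 d)
    = lam / 2 * (trace A + d$3)\<^sup>2 + mu * ((norm A)\<^sup>2 + (d$1)\<^sup>2 / 2 + (d$2)\<^sup>2 / 2 + (d$3)\<^sup>2)"
  using assms by (simp add: trace_iota_sym_e3 norm_symm_iota_sym_e3)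

lemma Gb_in_Sym2: "Gb i \<in> Sym2"
  by (auto simp: Sym2_def Gb_def transpose_def vec_eq_iff)

lemma sum_inner_Gb_scaleR:
  assumes "U \<in> Sym2"
  shows "(\<Sum>i\<in>{1,2,3::nat}. (U \<bullet> Gb i) *\<^sub>R Gb i) = U"
  using Sym2_entry[OF assms]
  by (simp add: vec_eq_iff forall_2 inner_vec_def sum_2 Gb_def field_simps)

section \<open>Integrals of piecewise affine arguments\<close>

lemma has_integral_quadratic:
  fixes a b c0 c1 c2 :: real
  assumes "a \<le> b"
  shows "((\<lambda>x. c2 * x\<^sup>2 + c1 * x + c0) has_integral
           (c2 * (b^3 - a^3) / 3 + c1 * (b\<^sup>2 - a\<^sup>2) / 2 + c0 * (b - a))) {a..b}"
proof -
  define F where "F x = c2 * x^3 / 3 + c1 * x\<^sup>2 / 2 + c0 * x" for x :: real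
  have "((\<lambda>x. c2 * x\<^sup>2 + c1 * x + c0) has_integral (F b - F a)) {a..b}"
  proof (rule fundamental_theorem_of_calculus[OF assms])
    fix x
    have "(F has_real_derivative (c2 * x\<^sup>2 + c1 * x + c0)) (at x within {a..b})"
      unfolding F_def by (auto intro!: derivative_eq_intros simp: power2_eq_square)
    then show "(F has_vector_derivative (c2 * x\<^sup>2 + c1 * x + c0)) (at x within {a..b})"
      by (simp add: has_real_derivative_iff_has_vector_derivative)
  qed
  then show ?thesis
    by (simp add: F_def algebra_simps diff_divide_distrib)
qed

lemma has_integral_piecewise_quadratic:
  fixes p0 p1 p2 r0 r1 :: real
  shows "((\<lambda>x. p2 * x\<^sup>2 + p1 * x + p0 + (if x > 0 then r1 * x + r0 else 0)) has_integral
           (p2 / 12 + p0 + r1 / 8 + r0 / 2)) {-(1/2)..1/2}"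
proof -
  let ?f = "\<lambda>x. p2 * x\<^sup>2 + p1 * x + p0 + (if x > 0 then r1 * x + r0 else 0)"
  have "(?f has_integral (p2 / 24 - p1 / 8 + p0 / 2)) {-(1/2)..0}"
  proof (rule has_integral_spike_finite[of "{}"])
    show "((\<lambda>x. p2 * x\<^sup>2 + p1 * x + p0) has_integral (p2 / 24 - p1 / 8 + p0 / 2)) {-(1/2)..0}"
      using has_integral_quadratic[of "-(1/2)" 0 p2 p1 p0] by (simp add: power2_eq_square power3_eq_cube)
  qed auto
  moreover have "(?f has_integral (p2 / 24 + (p1 + r1) / 8 + (p0 + r0) / 2)) {0..1/2}"
  proof (rule has_integral_spike_finite[of "{0}"])
    show "((\<lambda>x. p2 * x\<^sup>2 + (p1 + r1) * x + (p0 + r0)) has_integral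
            (p2 / 24 + (p1 + r1) / 8 + (p0 + r0) / 2)) {0..1/2}"
      using has_integral_quadratic[of 0 "1/2" p2 "p1 + r1" "p0 + r0"]
      by (simp add: power2_eq_square power3_eq_cube)
  qed (auto simp: algebra_simps)
  ultimately have "(?f has_integral ((p2 / 24 - p1 / 8 + p0 / 2) + (p2 / 24 + (p1 + r1) / 8 + (p0 + r0) / 2)))
      {-(1/2)..1/2}"
    by (rule has_integral_combine[rotated 2]) auto
  then show ?thesis
    by (rule has_integral_eq_rhs) (simp add: field_simps)
qed

lemma integral_piecewise_affine_bilinear:
  fixes \<beta> :: "'a::real_vector \<Rightarrow> 'a \<Rightarrow> real" and R S P :: 'a
  assumes bil: "bilinear \<beta>" and sym: "\<And>X Y. \<beta> X Y = \<beta> Y X"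
  defines "v x \<equiv> x *\<^sub>R R + S + (if x > 0 then P else 0)"
  shows "integral {-(1/2)..1/2} (\<lambda>x. \<beta> (v x) (v x))
    = \<beta> (R + (3/2) *\<^sub>R P) (R + (3/2) *\<^sub>R P) / 12 + \<beta> (S + (1/2) *\<^sub>R P) (S + (1/2) *\<^sub>R P)
      + \<beta> P P / 16"
proof -
  have expand: "\<beta> (v x) (v x) = \<beta> R R * x\<^sup>2 + 2 * \<beta> R S * x + \<beta> S S
      + (if x > 0 then 2 * \<beta> R P * x + (\<beta> P P + 2 * \<beta> S P) else 0)" for x
    unfolding v_def using bil
    by (simp add: bilinear_ladd bilinear_radd bilinear_lmul bilinear_rmul bilinear_lzero bilinear_rzero
        sym[of S R] sym[of P R] sym[of P S] power2_eq_square algebra_simps)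
  show ?thesis
    unfolding expand
    using has_integral_piecewise_quadratic[of "\<beta> R R" "2 * \<beta> R S" "\<beta> S S" "2 * \<beta> R P"
        "\<beta> P P + 2 * \<beta> S P", THEN integral_unique] bil
    by (simp add: bilinear_ladd bilinear_radd bilinear_lmul bilinear_rmul sym[of P R] sym[of P S]
        field_simps)
qed

section \<open>Relaxation of a coercive quadratic form\<close>

locale coercive_quadratic =
  fixes Q :: "mat3 \<Rightarrow> real" and B :: "mat3 \<Rightarrow> mat3 \<Rightarrow> real" and c :: real
  assumes bilinear: "bilinear B" and B_sym: "B X Y = B Y X" and Q_eq: "Q G = B G G"
    and c_pos: "0 < c" and coercive: "c * (norm (symm G))\<^sup>2 \<le> Q G"
begin

lemma Q_add: "Q (X + Y) = Q X + 2 * B X Y + Q Y"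
  using bilinear by (simp add: Q_eq bilinear_ladd bilinear_radd B_sym[of Y X])

lemma Q_scale: "Q (t *\<^sub>R X) = t\<^sup>2 * Q X"
  using bilinear by (simp add: Q_eq bilinear_lmul bilinear_rmul power2_eq_square)

lemma Q_nonneg: "0 \<le> Q X"
  using coercive[of X] c_pos by (meson mult_nonneg_nonneg order_trans less_imp_le zero_le_power2)

lemma symm_eq_0_if_Q_eq_0: "Q X = 0 \<Longrightarrow> symm X = 0"
  using coercive[of X] c_pos by (simp add: mult_le_0_iff)

lemma B_eq_0_if_minimal:
  assumes "\<And>s. Q Y \<le> Q (Y + s *\<^sub>R Z)"
  shows "B Y Z = 0"
proof (rule nonneg_quadratic_imp_linear_coeff_0)
  show "0 \<le> 2 * s * B Y Z + s\<^sup>2 * Q Z" for s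
    using assms[of s] bilinear by (simp add: Q_add Q_scale bilinear_rmul)
qed

lemma ex_min_sym_e3: "\<exists>d0. \<forall>d. Q (X + sym_e3 d0) \<le> Q (X + sym_e3 d)"
proof -
  define R where "R = 2 * (norm (symm X) + sqrt (Q X / c))"
  have cont: "continuous_on (cball 0 R) (\<lambda>d. Q (X + sym_e3 d))"
    unfolding Q_eq using linear_sym_e3
    by (intro bilinear_continuous_on_compose[OF _ _ bilinear] continuous_intros
        linear_continuous_on linear_conv_bounded_linear[THEN iffD1])
  have "0 \<le> R"
    using Q_nonneg c_pos by (simp add: R_def)
  then obtain d0 where d0: "\<forall>d\<in>cball 0 R. Q (X + sym_e3 d0) \<le> Q (X + sym_e3 d)"
    using continuous_attains_inf[OF compact_cball _ cont] by fastforce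
  have "Q (X + sym_e3 d0) \<le> Q (X + sym_e3 d)" if "R < norm d" for d
  proof -
    have "sqrt (Q X / c) < norm (sym_e3 d + symm X)"
      using that norm_le_norm_sym_e3[of d] norm_diff_ineq[of "sym_e3 d" "symm X"]
      by (simp add: R_def)
    then have "Q X / c < (norm (symm (X + sym_e3 d)))\<^sup>2"
      using real_sqrt_less_iff[of "Q X / c" "(norm (symm (X + sym_e3 d)))\<^sup>2"]
      by (simp add: symm_sym_e3 add.commute symm_add)
    then have "Q X < Q (X + sym_e3 d)"
      using coercive[of "X + sym_e3 d"] c_pos by (simp add: field_simps)
    moreover have "Q (X + sym_e3 d0) \<le> Q X"
      using d0[rule_format, of 0] \<open>0 \<le> R\<close> linear_0[OF linear_sym_e3] by simp
    ultimately show ?thesis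
      by linarith
  qed
  then show ?thesis
    using d0 by (metis linorder_not_le mem_cball_0)
qed

definition relax :: "mat3 \<Rightarrow> mat3" where
  "relax X = X + sym_e3 (SOME d0. \<forall>d. Q (X + sym_e3 d0) \<le> Q (X + sym_e3 d))"

lemma Q_relax_le: "Q (relax X) \<le> Q (X + sym_e3 d)"
  unfolding relax_def using someI_ex[OF ex_min_sym_e3[of X]] by blast

lemma relax_eq: "\<exists>d. relax X = X + sym_e3 d"
  by (auto simp: relax_def)

lemma B_relax_sym_e3: "B (relax X) (sym_e3 w) = 0"
proof (rule B_eq_0_if_minimal)
  obtain d where "relax X = X + sym_e3 d"
    using relax_eq by blast
  then have "relax X + s *\<^sub>R sym_e3 w = X + sym_e3 (d + s *\<^sub>R w)" for s
    using linear_sym_e3 by (simp add: linear_add linear_scale add.assoc)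
  then show "Q (relax X) \<le> Q (relax X + s *\<^sub>R sym_e3 w)" for s
    using Q_relax_le by presburger
qed

lemma relax_unique:
  assumes "Y = X + sym_e3 d" and "\<And>w. B Y (sym_e3 w) = 0"
  shows "relax X = Y"
proof -
  obtain d' where d': "relax X = X + sym_e3 d'"
    using relax_eq by blast
  define D where "D = sym_e3 (d' - d)"
  have D: "relax X - Y = D"
    using assms(1) d' linear_sym_e3 by (simp add: D_def linear_diff)
  have "Q D = B (relax X) D - B Y D"
    using bilinear by (simp add: Q_eq bilinear_lsub flip: D)
  also have "\<dots> = 0"
    by (simp add: D_def B_relax_sym_e3 assms(2))
  finally have "D = 0"
    using symm_eq_0_if_Q_eq_0[of D] symm_sym_e3[of "d' - d"] by (simp add: D_def)
  with D show ?thesis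
    by simp
qed

lemma linear_relax: "linear relax"
proof (rule linearI)
  fix X Y :: mat3 and t :: real
  obtain d e where d: "relax X = X + sym_e3 d" and e: "relax Y = Y + sym_e3 e"
    using relax_eq by meson
  show "relax (X + Y) = relax X + relax Y"
  proof (rule relax_unique)
    show "relax X + relax Y = X + Y + sym_e3 (d + e)"
      using d e linear_sym_e3 by (simp add: linear_add algebra_simps)
    show "B (relax X + relax Y) (sym_e3 w) = 0" for w
      using bilinear by (simp add: bilinear_ladd B_relax_sym_e3)
  qed
  show "relax (t *\<^sub>R X) = t *\<^sub>R relax X"
  proof (rule relax_unique)
    show "t *\<^sub>R relax X = t *\<^sub>R X + sym_e3 (t *\<^sub>R d)"
      using d linear_sym_e3 by (simp add: linear_scale algebra_simps)
    show "B (t *\<^sub>R relax X) (sym_e3 w) = 0" for w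
      using bilinear by (simp add: bilinear_lmul B_relax_sym_e3)
  qed
qed

lemma INF_sym_e3_eq_Q_relax: "(INF d. Q (X + sym_e3 d)) = Q (relax X)"
proof (rule cInf_eq_minimum)
  show "Q (relax X) \<in> range (\<lambda>d. Q (X + sym_e3 d))"
    using relax_eq[of X] by auto
qed (auto simp: Q_relax_le)

definition Q_red :: "mat2 \<Rightarrow> real" where
  "Q_red A = Q (relax (iota A))"

definition B_red :: "mat2 \<Rightarrow> mat2 \<Rightarrow> real" where
  "B_red A C = B (relax (iota A)) (relax (iota C))"

lemma bilinear_B_red: "bilinear B_red"
proof -
  have L: "linear (\<lambda>A. relax (iota A))"
    using linear_compose[OF linear_iota linear_relax] by (simp add: o_def)
  show ?thesis
    unfolding bilinear_def B_red_def
    by (auto intro!: linearI simp: linear_add[OF L] linear_scale[OF L] bilinear_ladd[OF bilinear]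
        bilinear_radd[OF bilinear] bilinear_lmul[OF bilinear] bilinear_rmul[OF bilinear])
qed

lemma Q_red_eq: "Q_red A = B_red A A"
  by (simp add: Q_red_def B_red_def Q_eq)

lemma B_red_sym: "B_red A C = B_red C A"
  by (simp add: B_red_def B_sym)

lemma Q2_eq_Q_red: "Q2 (\<lambda>_. Q) x3 A = Q_red A"
  by (simp add: Q2_def Q_red_def INF_sym_e3_eq_Q_relax flip: sym_e3_def)

lemma Q_red_nonneg: "0 \<le> Q_red A"
  by (simp add: Q_red_def Q_nonneg)

lemma Sym2_eq_0_if_Q_red_eq_0:
  assumes "A \<in> Sym2" and "Q_red A = 0"
  shows "A = 0"
proof -
  obtain d where d: "relax (iota A) = iota A + sym_e3 d"
    using relax_eq by blast
  have "symm (iota A + sym_e3 d) = 0"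
    using assms(2) symm_eq_0_if_Q_eq_0 by (simp add: Q_red_def flip: d)
  then have "symm (iota A + sym_e3 d) $ i $ j = 0" for i j
    by simp
  from this[of 1 1] this[of 1 2] this[of 2 2] have "A$1$1 = 0" "A$1$2 = 0" "A$2$2 = 0"
    using Sym2_entry[OF assms(1)] by (simp_all add: symm_def sym_e3_entry e3_entry iota_def)
  then show ?thesis
    using Sym2_entry[OF assms(1)] by (simp add: vec_eq_iff forall_2)
qed

lemma Q_red_scale: "Q_red (t *\<^sub>R A) = t\<^sup>2 * Q_red A"
  using bilinear_B_red by (simp add: Q_red_eq bilinear_lmul bilinear_rmul power2_eq_square)

lemma Q_red_0 [simp]: "Q_red 0 = 0"
  using Q_red_scale[of 0 0] by simp

lemma integral_Q_red:
  "integral {-(1/2)..1/2} (\<lambda>x. Q_red (x *\<^sub>R R + S + (if x > 0 then P else 0)))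
    = Q_red (R + (3/2) *\<^sub>R P) / 12 + Q_red (S + (1/2) *\<^sub>R P) + Q_red P / 16"
  unfolding Q_red_eq by (rule integral_piecewise_affine_bilinear[OF bilinear_B_red B_red_sym])

lemma Qel_eq: "Qel (\<lambda>_. Q) A = Q_red A / 12"
proof -
  have "integral {-(1/2)..1/2} (\<lambda>x. Q2 (\<lambda>_. Q) x (x *\<^sub>R A + M)) = Q_red A / 12 + Q_red M" for M
    using integral_Q_red[of A M 0] by (simp add: Q2_eq_Q_red)
  then show ?thesis
    unfolding Qel_def
    by (intro cInf_eq_minimum)
      (auto simp: Q_red_nonneg subspace_0[OF subspace_Sym2] intro!: image_eqI[of _ _ 0])
qed

lemma Eres_eq:
  assumes "U \<in> Sym2"
  shows "Eres (\<lambda>_. Q) U = Q_red U / 64"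
proof -
  have "integral {-(1/2)..1/2}
      (\<lambda>x. Q2 (\<lambda>_. Q) x (x *\<^sub>R A + M + (if x > 0 then (1/2) *\<^sub>R U else 0)))
    = Q_red (A + (3/4) *\<^sub>R U) / 12 + Q_red (M + (1/4) *\<^sub>R U) + Q_red U / 64" for A M
    using integral_Q_red[of A M "(1/2) *\<^sub>R U"] by (simp add: Q2_eq_Q_red Q_red_scale power2_eq_square)
  moreover have "(- (3/4) *\<^sub>R U, - (1/4) *\<^sub>R U) \<in> Sym2 \<times> Sym2"
    using assms subspace_Sym2 by (simp add: subspace_neg subspace_scale)
  ultimately show ?thesis
    unfolding Eres_def
    by (intro cInf_eq_minimum) (force simp: Q_red_nonneg)+
qed

lemma Jfun_eq:
  "Jfun (\<lambda>_. Q) i (A, M)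
    = Q_red ((3/4) *\<^sub>R Gb i - A) / 12 + Q_red ((1/4) *\<^sub>R Gb i - M) + Q_red (Gb i) / 64"
proof -
  have "(\<lambda>x. Q2 (\<lambda>_. Q) x ((if x > 0 then (1/2) *\<^sub>R Gb i else 0) - (x *\<^sub>R A + M)))
      = (\<lambda>x. Q_red (x *\<^sub>R (- A) + (- M) + (if x > 0 then (1/2) *\<^sub>R Gb i else 0)))"
    by (auto simp: Q2_eq_Q_red algebra_simps)
  then show ?thesis
    using integral_Q_red[of "- A" "- M" "(1/2) *\<^sub>R Gb i"]
    by (simp add: Jfun_def Q_red_scale power2_eq_square algebra_simps)
qed

lemma minimizer_eq: "minimizer (\<lambda>_. Q) i = ((3/4) *\<^sub>R Gb i, (1/4) *\<^sub>R Gb i)"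
proof -
  let ?AM0 = "((3/4) *\<^sub>R Gb i, (1/4) *\<^sub>R Gb i)"
  have AM0: "?AM0 \<in> Sym2 \<times> Sym2"
    using subspace_Sym2 Gb_in_Sym2 by (simp add: subspace_scale)
  have "Jfun (\<lambda>_. Q) i ?AM0 \<le> Jfun (\<lambda>_. Q) i AM" for AM
    by (cases AM) (simp add: Jfun_eq Q_red_nonneg)
  moreover have "AM = ?AM0" if "AM \<in> Sym2 \<times> Sym2" and "Jfun (\<lambda>_. Q) i AM \<le> Jfun (\<lambda>_. Q) i ?AM0"
    for AM
  proof -
    obtain A M where AM: "AM = (A, M)"
      by fastforce
    have "Q_red ((3/4) *\<^sub>R Gb i - A) = 0" "Q_red ((1/4) *\<^sub>R Gb i - M) = 0"
      using that(2) Q_red_nonneg[of "(3/4) *\<^sub>R Gb i - A"] Q_red_nonneg[of "(1/4) *\<^sub>R Gb i - M"]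
      by (simp_all add: AM Jfun_eq)
    moreover have "(3/4) *\<^sub>R Gb i - A \<in> Sym2" "(1/4) *\<^sub>R Gb i - M \<in> Sym2"
      using that(1) AM0 subspace_Sym2 by (simp_all add: AM subspace_diff)
    ultimately show ?thesis
      using Sym2_eq_0_if_Q_red_eq_0 by (fastforce simp: AM)
  qed
  ultimately show ?thesis
    unfolding minimizer_def using AM0 by (intro the_equality) auto
qed

lemma BB_eq:
  assumes "U \<in> Sym2"
  shows "BB (\<lambda>_. Q) U = (3/4) *\<^sub>R U"
  unfolding BB_def minimizer_eq fst_conv scaleR_left_commute[of _ "3/4"]
    scaleR_sum_right[symmetric] sum_inner_Gb_scaleR[OF assms] ..

lemma isotropic_moduli_pos:
  assumes "\<forall>G. Q G = lam / 2 * (trace G)\<^sup>2 + mu * (norm (symm G))\<^sup>2"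
  shows "0 < mu" and "0 < lam + 2 * mu"
proof -
  have "c * (norm (symm (iota 0 + sym_e3 (axis 1 1))))\<^sup>2 \<le> Q (iota 0 + sym_e3 (axis 1 1))"
    by (rule coercive)
  then show "0 < mu"
    using c_pos isotropic_Q_iota_sym_e3[OF assms subspace_0[OF subspace_Sym2]]
      norm_symm_iota_sym_e3[OF subspace_0[OF subspace_Sym2]]
    by (simp add: axis_def trace_def)
  have "c * (norm (symm (iota 0 + sym_e3 (axis 3 1))))\<^sup>2 \<le> Q (iota 0 + sym_e3 (axis 3 1))"
    by (rule coercive)
  then show "0 < lam + 2 * mu"
    using c_pos isotropic_Q_iota_sym_e3[OF assms subspace_0[OF subspace_Sym2]]
      norm_symm_iota_sym_e3[OF subspace_0[OF subspace_Sym2]]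
    by (simp add: axis_def trace_def)
qed

lemma Q_red_isotropic:
  assumes Q_iso: "\<forall>G. Q G = lam / 2 * (trace G)\<^sup>2 + mu * (norm (symm G))\<^sup>2" and A: "A \<in> Sym2"
  shows "Q_red A = mu * lam / (lam + 2 * mu) * (trace A)\<^sup>2 + mu * (norm A)\<^sup>2"
proof -
  note pos = isotropic_moduli_pos[OF Q_iso]
  define y where "y = lam * trace A / (lam + 2 * mu)"
  define v where "v = mu * lam / (lam + 2 * mu) * (trace A)\<^sup>2 + mu * (norm A)\<^sup>2"
  have Q_eq_v: "Q (iota A + sym_e3 d)
      = v + (lam + 2 * mu) / 2 * (d$3 + y)\<^sup>2 + mu * ((d$1)\<^sup>2 / 2 + (d$2)\<^sup>2 / 2)" for d
    using complete_square_isotropic[OF pos(2), of "trace A" "d$3"]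
    by (simp add: isotropic_Q_iota_sym_e3[OF Q_iso A] v_def y_def algebra_simps)
  have "(INF d. Q (iota A + sym_e3 d)) = v"
  proof (rule cInf_eq_minimum)
    show "v \<in> range (\<lambda>d. Q (iota A + sym_e3 d))"
      by (rule range_eqI[of _ _ "\<chi> i. if i = 3 then - y else 0"]) (simp add: Q_eq_v)
    show "v \<le> x" if "x \<in> range (\<lambda>d. Q (iota A + sym_e3 d))" for x
      using that pos by (auto simp: Q_eq_v)
  qed
  then show ?thesis
    by (simp add: Q_red_def v_def flip: INF_sym_e3_eq_Q_relax)
qed

end

theorem lemma2p4:
  fixes CW qW :: real and rW :: "real \<Rightarrow> ereal"
    and W :: "mat3 \<Rightarrow> ereal" and Q :: "mat3 \<Rightarrow> real"
  assumes "assumption_W CW qW rW W Q"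
  shows "(\<forall>A\<in>Sym2. Qel (\<lambda>_. Q) A = (1/12) * (INF d. Q (iota A + symm (outer d e3))))
       \<and> (\<forall>U\<in>Sym2. Eres (\<lambda>_. Q) U = (3/16) * Qel (\<lambda>_. Q) U)
       \<and> (\<forall>U\<in>Sym2. BB (\<lambda>_. Q) U = (3/4) *\<^sub>R U)
       \<and> (\<forall>lam mu :: real. (\<forall>G. Q G = lam / 2 * (trace G)\<^sup>2 + mu * (norm (symm G))\<^sup>2) \<longrightarrow>
            (\<forall>A\<in>Sym2. Qel (\<lambda>_. Q) A
               = (1/12) * (mu * lam / (lam + 2 * mu) * (trace A)\<^sup>2 + mu * (norm A)\<^sup>2))
          \<and> (\<forall>U\<in>Sym2. Eres (\<lambda>_. Q) U
               = (1/64) * (mu * lam / (lam + 2 * mu) * (trace U)\<^sup>2 + mu * (norm U)\<^sup>2)))"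
proof -
  have "quadratic_form Q" and "0 < CW"
    using assms by (simp_all add: assumption_W_def)
  then obtain B where "bilinear B" "\<And>X Y. B X Y = B Y X" "\<And>G. Q G = B G G"
    using quadratic_form_symmetric by blast
  then interpret coercive_quadratic Q B "4 / (25 * CW)"
    using \<open>0 < CW\<close> assumption_W_coercive[OF assms] by unfold_locales simp_all
  have INF_eq: "(INF d. Q (iota A + symm (outer d e3))) = Q_red A" for A
    by (simp add: Q_red_def INF_sym_e3_eq_Q_relax flip: sym_e3_def)
  show ?thesis
    using Q_red_isotropic by (simp add: INF_eq Qel_eq Eres_eq BB_eq)
qed

end
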